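(* Consider the variant of the Deferred-Revelation Auction (DRA) over a public ledger, described in the context, in which the ledger knows and enforces a fixed feasibility constraint $\mathcal{F}$ (so the auctioneer cannot misreport it). For any fixed downward-closed feasibility constraint $\mathcal{F}$ that is not a matroid, the DRA is not credible for any collateral $f$, even in an instance with a single real bidder whose value is drawn from the exponential distribution with mean $1$.
   Context: A feasibility constraint $\mathcal{F}$ is a downward-closed family of subsets of a finite ground set $E$ of bidder slots (sets of bids that may be allocated simultaneously); it is a matroid if it additionally satisfies the augmentation property (if $A,B\in\mathcal{F}$, $|A|>|B|$, then $B\cup\{a\}\in\mathcal{F}$ for some $a\in A\setminus B$). Values are independent, bidders quasi-linear; virtual value $\varphi(v)=v-\frac{1-F(v)}{f(v)}$. The exponential distribution with mean $1$ has CDF $1-e^{-t}$, virtual value $v-1$, monopoly reserve $1$. DRA over a public ledger (visible to all) with a perfectly hiding, perfectly binding, non-malleable commitment scheme: (1) every participant (real bidders and any fake bids fabricated by the auctioneer, each occupying an element of $E$) commits to a bid and deposits collateral $f$; the auctioneer reports distributions $\hat D_j$ (virtual values $\hat\varphi_j$) for all committed bids (it may choose the distributions of fake bids arbitrarily); (2) each committed bid is revealed or concealed, and collateral of concealed bids is burnt; (3) among revealed bids, the set $S\in\mathcal{F}$ maximizing $\sum_{i\in S}\hat\varphi_i(b_i)$ (lexicographic tie-breaking) is allocated, each allocated bidder paying its critical bid. The auctioneer chooses which fake bids to conceal after seeing revealed real bids. Its revenue is real bidders' payments minus burnt collateral of its concealed fake bids. The DRA is credible for collateral $f$ if, when real bidders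 bid truthfully, the auctioneer maximizes expected revenue by fabricating no bids and reporting true distributions. *)

theory Defs
  imports "HOL-Probability.Probability"
begin

definition downward_closed :: "'a set \<Rightarrow> 'a set set \<Rightarrow> bool" where
  "downward_closed E F \<longleftrightarrow> F \<subseteq> Pow E \<and> (\<forall>A\<in>F. \<forall>B. B \<subseteq> A \<longrightarrow> B \<in> F)"

definition is_matroid :: "'a set \<Rightarrow> 'a set set \<Rightarrow> bool" where
  "is_matroid E F \<longleftrightarrow> downward_closed E F \<and>
     (\<forall>A\<in>F. \<forall>B\<in>F. card A > card B \<longrightarrow> (\<exists>a\<in>A - B. insert a B \<in> F))"

definition virtual_value :: "(real \<Rightarrow> real) \<Rightarrow> (real \<Rightarrow> real) \<Rightarrow> real \<Rightarrow> real" where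
  "virtual_value G g b = b - (1 - G b) / g b"

definition valid_report :: "(real \<Rightarrow> real) \<Rightarrow> (real \<Rightarrow> real) \<Rightarrow> bool" where
  "valid_report G g \<longleftrightarrow> G 0 = 0 \<and> mono_on {0..} G \<and> (G \<longlongrightarrow> 1) at_top \<and>
     (\<forall>b\<ge>0. 0 < g b \<and> (G has_real_derivative g b) (at b within {0..}))"

definition exp_cdf :: "real \<Rightarrow> real" where "exp_cdf t = 1 - exp (- t)"
definition exp_pdf :: "real \<Rightarrow> real" where "exp_pdf t = exp (- t)"

text \<open>Lexicographic order on (characteristic vectors of) finite sets: S is preferred
  to T iff the least element on which they differ belongs to S.\<close>
definition lex_prefer :: "'a::linorder set \<Rightarrow> 'a set \<Rightarrow> bool" where
  "lex_prefer S T \<longleftrightarrow> S \<noteq> T \<and> Min ((S - T) \<union> (T - S)) \<in> S"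

text \<open>Among the revealed bids R, the feasible set maximising the total reported virtual
  value wt (wt i = reported virtual value of bid i at its bid), lexicographic tie-breaking.\<close>
definition dra_alloc :: "'a::linorder set set \<Rightarrow> 'a set \<Rightarrow> ('a \<Rightarrow> real) \<Rightarrow> 'a set" where
  "dra_alloc F R wt = (THE S. S \<in> F \<and> S \<subseteq> R \<and>
      (\<forall>T\<in>F. T \<subseteq> R \<longrightarrow>
         sum wt T < sum wt S \<or> (sum wt T = sum wt S \<and> (T = S \<or> lex_prefer S T))))"

text \<open>Critical bid of the real bidder at slot e, given the revealed fake bids R (with reported
  virtual values wt) and the reported virtual value function phi of the real bidder.\<close>
definition critical_bid :: "'a::linorder set set \<Rightarrow> 'a \<Rightarrow> 'a set \<Rightarrow> ('a \<Rightarrow> real)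
    \<Rightarrow> (real \<Rightarrow> real) \<Rightarrow> real" where
  "critical_bid F e R wt phi = Inf {b. 0 \<le> b \<and> e \<in> dra_alloc F (insert e R) (wt(e := phi b))}"

definition real_payment :: "'a::linorder set set \<Rightarrow> 'a \<Rightarrow> 'a set \<Rightarrow> ('a \<Rightarrow> real)
    \<Rightarrow> (real \<Rightarrow> real) \<Rightarrow> real \<Rightarrow> real" where
  "real_payment F e R wt phi v =
     (if e \<in> dra_alloc F (insert e R) (wt(e := phi v)) then critical_bid F e R wt phi else 0)"

text \<open>K = slots of fake bids, wt = reported virtual values of the fake bids at their bids,
  (G,g) = reported distribution of the real bidder, rv v = fake bids revealed
  after seeing the real bid v; each concealed fake bid burns collateral f.\<close>
definition dra_revenue :: "'a::linorder set set \<Rightarrow> 'a \<Rightarrow> real \<Rightarrow> 'a set \<Rightarrow> ('a \<Rightarrow> real)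
    \<Rightarrow> (real \<Rightarrow> real) \<Rightarrow> (real \<Rightarrow> real) \<Rightarrow> (real \<Rightarrow> 'a set) \<Rightarrow> real \<Rightarrow> real" where
  "dra_revenue F e f K wt G g rv v =
     real_payment F e (rv v) wt (virtual_value G g) v - f * real (card (K - rv v))"

abbreviation exp1_dist :: "real measure" where
  "exp1_dist \<equiv> density lborel (exponential_density 1)"

definition expected_revenue :: "'a::linorder set set \<Rightarrow> 'a \<Rightarrow> real \<Rightarrow> 'a set \<Rightarrow> ('a \<Rightarrow> real)
    \<Rightarrow> (real \<Rightarrow> real) \<Rightarrow> (real \<Rightarrow> real) \<Rightarrow> (real \<Rightarrow> 'a set) \<Rightarrow> real" where
  "expected_revenue F e f K wt G g rv = integral\<^sup>L exp1_dist (dra_revenue F e f K wt G g rv)"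

definition admissible_strategy :: "'a::linorder set \<Rightarrow> 'a set set \<Rightarrow> 'a \<Rightarrow> real \<Rightarrow> 'a set
    \<Rightarrow> ('a \<Rightarrow> real) \<Rightarrow> (real \<Rightarrow> real) \<Rightarrow> (real \<Rightarrow> real) \<Rightarrow> (real \<Rightarrow> 'a set) \<Rightarrow> bool" where
  "admissible_strategy E F e f K wt G g rv \<longleftrightarrow>
     K \<subseteq> E - {e} \<and> (\<forall>v. rv v \<subseteq> K) \<and> valid_report G g \<and>
     integrable exp1_dist (dra_revenue F e f K wt G g rv)"

text \<open>Credibility of the DRA for collateral f in the instance with one real bidder at slot e,
  with Exp(1) value: honest behaviour (no fake bids, true distribution) is revenue optimal.\<close>
definition dra_credible_single :: "'a::linorder set \<Rightarrow> 'a set set \<Rightarrow> 'a \<Rightarrow> real \<Rightarrow> bool" where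
  "dra_credible_single E F e f \<longleftrightarrow>
     (\<forall>K wt G g rv. admissible_strategy E F e f K wt G g rv \<longrightarrow>
        expected_revenue F e f K wt G g rv
          \<le> expected_revenue F e f {} (\<lambda>_. 0) exp_cdf exp_pdf (\<lambda>_. {}))"

end

theory Submission
  imports Defs
begin

text \<open>Take feasible sets \<open>A\<close>, \<open>B\<close> violating augmentation with \<open>|A \<union> B|\<close> minimal and some
  \<open>x \<in> A - B\<close>; by minimality, \<open>A - {x}\<close> cannot be augmented by any \<open>b \<in> B - A\<close>.
  Put the real bidder at \<open>x\<close> and fake bids at \<open>(A \<union> B) - {x}\<close>, those of \<open>A - {x}\<close> carrying a
  much larger virtual value. With all fake bids revealed, \<open>A - {x}\<close> is optimal both with and
  without \<open>x\<close>, so the real bidder faces the monopoly price \<open>1\<close>, exactly as in the honest auction.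
  Against the fake bids of \<open>B\<close> alone the real bidder faces a price \<open>P\<close>, and since \<open>B \<union> {x}\<close> is
  infeasible, \<open>P - 1\<close> is at least the virtual value of one bid of \<open>B\<close>, chosen to exceed the
  collateral burnt by concealing the rest. Concealing exactly when the value exceeds \<open>P\<close>
  therefore raises the revenue on \<open>{v > P}\<close> and leaves it unchanged elsewhere.\<close>

lemma lex_prefer_irrefl: "\<not> lex_prefer S S"
  unfolding lex_prefer_def by auto

lemma lex_prefer_total:
  assumes "finite S" "finite T" "S \<noteq> T"
  shows "lex_prefer S T \<or> lex_prefer T S"
proof -
  have "Min ((S - T) \<union> (T - S)) \<in> (S - T) \<union> (T - S)"
    using assms by (intro Min_in) auto
  moreover have "(T - S) \<union> (S - T) = (S - T) \<union> (T - S)" by auto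
  ultimately show ?thesis unfolding lex_prefer_def using assms by auto
qed

lemma lex_prefer_trans:
  assumes fin: "finite S" "finite T" "finite U"
    and st: "lex_prefer S T" and tu: "lex_prefer T U"
  shows "lex_prefer S U"
proof -
  define m1 where "m1 = Min ((S - T) \<union> (T - S))"
  define m2 where "m2 = Min ((T - U) \<union> (U - T))"
  have m1S: "m1 \<in> S" and m2T: "m2 \<in> T"
    using st tu unfolding lex_prefer_def m1_def m2_def by auto
  have "m1 \<in> (S - T) \<union> (T - S)" "m2 \<in> (T - U) \<union> (U - T)"
    unfolding m1_def m2_def using st tu fin unfolding lex_prefer_def by (intro Min_in; auto)+
  note m1_diff = this(1) and m2_diff = this(2)
  have below_m1: "z \<in> S \<longleftrightarrow> z \<in> T" if "z < m1" for z
    using that fin Min_le[of "(S - T) \<union> (T - S)" z] unfolding m1_def by (auto simp: not_le[symmetric])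
  have below_m2: "z \<in> T \<longleftrightarrow> z \<in> U" if "z < m2" for z
    using that fin Min_le[of "(T - U) \<union> (U - T)" z] unfolding m2_def by (auto simp: not_le[symmetric])
  define m where "m = min m1 m2"
  have mS: "m \<in> S"
    using m1S m2T below_m1 unfolding m_def by (cases "m1 \<le> m2") (auto simp: min_def)
  have mU: "m \<notin> U"
    using m1_diff m2_diff m1S m2T below_m2[of m1] unfolding m_def
    by (cases m1 m2 rule: linorder_cases) auto
  have "Min ((S - U) \<union> (U - S)) = m"
  proof (rule Min_eqI)
    show "finite ((S - U) \<union> (U - S))" using fin by auto
    show "m \<in> (S - U) \<union> (U - S)" using mS mU by auto
    fix y assume "y \<in> (S - U) \<union> (U - S)"
    moreover have "y \<in> S \<longleftrightarrow> y \<in> U" if "y < m"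
      using below_m1[of y] below_m2[of y] that unfolding m_def by auto
    ultimately show "m \<le> y" by force
  qed
  then show ?thesis unfolding lex_prefer_def using mS mU by auto
qed

lemma finite_has_maximal_rel:
  assumes "finite X" "X \<noteq> {}"
    and "\<And>a b c. r a b \<Longrightarrow> r b c \<Longrightarrow> r a c" and "\<And>a. \<not> r a a"
  shows "\<exists>m\<in>X. \<forall>y\<in>X. \<not> r y m"
  using assms(1,2)
proof (induction X rule: finite_ne_induct)
  case (singleton x)
  then show ?case using assms(4) by auto
next
  case (insert x X)
  then obtain m where m: "m \<in> X" "\<forall>y\<in>X. \<not> r y m" by auto
  show ?case
  proof (cases "r x m")
    case True
    then show ?thesis using m assms(3,4) by blast
  next
    case False
    then show ?thesis using m by auto
  qed
qed

lemma dra_alloc_unique: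
  fixes wt :: "'a::linorder \<Rightarrow> real"
  assumes "finite R" "{} \<in> F"
  shows "\<exists>!S. S \<in> F \<and> S \<subseteq> R \<and>
    (\<forall>T\<in>F. T \<subseteq> R \<longrightarrow>
       sum wt T < sum wt S \<or> (sum wt T = sum wt S \<and> (T = S \<or> lex_prefer S T)))"
proof -
  define X where "X = {S. S \<in> F \<and> S \<subseteq> R}"
  define better where "better = (\<lambda>S T. S \<in> X \<and> T \<in> X \<and>
    (sum wt T < sum wt S \<or> (sum wt T = sum wt S \<and> lex_prefer S T)))"
  have fin_X: "finite X" unfolding X_def using assms(1) by (auto intro: finite_subset[of _ "Pow R"])
  have fin_mem: "finite S" if "S \<in> X" for S
    using that assms(1) unfolding X_def by (auto intro: finite_subset)
  have better_trans: "better S U" if "better S T" "better T U" for S T U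
  proof -
    have "S \<in> X" "T \<in> X" "U \<in> X" using that unfolding better_def by auto
    moreover from this have "lex_prefer S T \<Longrightarrow> lex_prefer T U \<Longrightarrow> lex_prefer S U"
      using lex_prefer_trans fin_mem by blast
    ultimately show ?thesis using that unfolding better_def by auto
  qed
  have better_irrefl: "\<not> better S S" for S
    unfolding better_def by (simp add: lex_prefer_irrefl)
  obtain m where m: "m \<in> X" "\<forall>T\<in>X. \<not> better T m"
    using finite_has_maximal_rel[OF fin_X, of better] better_trans better_irrefl assms(2)
    unfolding X_def by blast
  have better_total: "better S T \<or> better T S" if "S \<in> X" "T \<in> X" "S \<noteq> T" for S T
    using that lex_prefer_total[of S T] fin_mem unfolding better_def by auto
  have optimal_iff: "sum wt T < sum wt S \<or> (sum wt T = sum wt S \<and> (T = S \<or> lex_prefer S T))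
      \<longleftrightarrow> T = S \<or> better S T" if "S \<in> X" "T \<in> X" for S T
    using that unfolding better_def by auto
  show ?thesis
  proof (rule ex1I[of _ m])
    have "T = m \<or> better m T" if "T \<in> X" for T
      using m better_total[of m T] that by auto
    then show "m \<in> F \<and> m \<subseteq> R \<and> (\<forall>T\<in>F. T \<subseteq> R \<longrightarrow>
        sum wt T < sum wt m \<or> (sum wt T = sum wt m \<and> (T = m \<or> lex_prefer m T)))"
      using m(1) optimal_iff[of m] unfolding X_def by auto
  next
    fix S assume "S \<in> F \<and> S \<subseteq> R \<and> (\<forall>T\<in>F. T \<subseteq> R \<longrightarrow>
        sum wt T < sum wt S \<or> (sum wt T = sum wt S \<and> (T = S \<or> lex_prefer S T)))"
    then have "S \<in> X" "m = S \<or> better S m"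
      using optimal_iff[of S m] m(1) unfolding X_def by auto
    then show "S = m" using m by auto
  qed
qed

lemma dra_alloc_optimal:
  fixes wt :: "'a::linorder \<Rightarrow> real"
  assumes "finite R" "{} \<in> F"
  shows "dra_alloc F R wt \<in> F" "dra_alloc F R wt \<subseteq> R"
    and "\<And>T. T \<in> F \<Longrightarrow> T \<subseteq> R \<Longrightarrow> sum wt T \<le> sum wt (dra_alloc F R wt)"
  using theI'[OF dra_alloc_unique[OF assms, of wt]] unfolding dra_alloc_def[symmetric]
  by (auto intro: less_imp_le)

text \<open>The externality of \<open>e\<close> on the revealed bids \<open>R\<close>: the virtual value \<open>e\<close> has to beat.\<close>
definition dra_threshold :: "'a::linorder set set \<Rightarrow> 'a \<Rightarrow> 'a set \<Rightarrow> ('a \<Rightarrow> real) \<Rightarrow> real" where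
  "dra_threshold F e R wt =
     Max (sum wt ` {T \<in> F. T \<subseteq> R}) - Max (sum wt ` {S. S \<subseteq> R \<and> insert e S \<in> F})"

lemma dra_alloc_wins:
  fixes wt :: "'a::linorder \<Rightarrow> real"
  assumes "finite R" "e \<notin> R" "{} \<in> F" "{e} \<in> F" "dra_threshold F e R wt < y"
  shows "e \<in> dra_alloc F (insert e R) (wt(e := y))"
proof (rule ccontr)
  define S where "S = dra_alloc F (insert e R) (wt(e := y))"
  assume "e \<notin> dra_alloc F (insert e R) (wt(e := y))"
  then have "e \<notin> S" unfolding S_def .
  moreover have S: "S \<in> F" "S \<subseteq> insert e R"
    using dra_alloc_optimal[of "insert e R" F] assms(1,3) unfolding S_def by auto
  ultimately have "S \<subseteq> R" by auto
  have fin_with: "finite {S. S \<subseteq> R \<and> insert e S \<in> F}" using assms(1) by simp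
  have "{} \<in> {S. S \<subseteq> R \<and> insert e S \<in> F}" using assms(4) by simp
  then obtain S0 where S0: "S0 \<subseteq> R" "insert e S0 \<in> F"
      and S0_max: "sum wt S0 = Max (sum wt ` {S. S \<subseteq> R \<and> insert e S \<in> F})"
    using Max_in[of "sum wt ` {S. S \<subseteq> R \<and> insert e S \<in> F}"] fin_with by fastforce
  have "sum wt S \<le> Max (sum wt ` {T \<in> F. T \<subseteq> R})"
    using \<open>S \<subseteq> R\<close> S(1) assms(1) by (intro Max_ge) auto
  also have "\<dots> < y + sum wt S0"
    using assms(5) S0_max unfolding dra_threshold_def by simp
  also have "\<dots> = sum (wt(e := y)) (insert e S0)"
  proof -
    have "e \<notin> S0" using S0(1) assms(2) by auto
    then have "sum (wt(e := y)) S0 = sum wt S0" by (intro sum.cong) auto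
    then show ?thesis using \<open>e \<notin> S0\<close> finite_subset[OF S0(1) assms(1)] by simp
  qed
  also have "\<dots> \<le> sum (wt(e := y)) S"
    unfolding S_def using S0 assms(1,3) by (intro dra_alloc_optimal) auto
  also have "\<dots> = sum wt S"
    using \<open>e \<notin> S\<close> by (intro sum.cong) auto
  finally show False by simp
qed

lemma dra_alloc_loses:
  fixes wt :: "'a::linorder \<Rightarrow> real"
  assumes "finite R" "e \<notin> R" "{} \<in> F" "y < dra_threshold F e R wt"
  shows "e \<notin> dra_alloc F (insert e R) (wt(e := y))"
proof
  define S where "S = dra_alloc F (insert e R) (wt(e := y))"
  assume "e \<in> dra_alloc F (insert e R) (wt(e := y))"
  then have "e \<in> S" unfolding S_def .
  have S: "S \<in> F" "S \<subseteq> insert e R"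
    using dra_alloc_optimal[of "insert e R" F] assms(1,3) unfolding S_def by auto
  have fin_without: "finite {T \<in> F. T \<subseteq> R}" using assms(1) by simp
  have "{} \<in> {T \<in> F. T \<subseteq> R}" using assms(3) by simp
  then obtain T0 where T0: "T0 \<in> F" "T0 \<subseteq> R"
      and T0_max: "sum wt T0 = Max (sum wt ` {T \<in> F. T \<subseteq> R})"
    using Max_in[of "sum wt ` {T \<in> F. T \<subseteq> R}"] fin_without by fastforce
  have "sum (wt(e := y)) S = y + sum wt (S - {e})"
  proof -
    have "sum (wt(e := y)) (S - {e}) = sum wt (S - {e})" by (intro sum.cong) auto
    then show ?thesis
      using sum.remove[OF finite_subset[OF S(2)] \<open>e \<in> S\<close>, of "wt(e := y)"] assms(1) by simp
  qed
  also have "\<dots> \<le> y + Max (sum wt ` {S. S \<subseteq> R \<and> insert e S \<in> F})"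
    using S \<open>e \<in> S\<close> assms(1) by (auto intro!: Max_ge simp: insert_absorb)
  also have "\<dots> < sum wt T0"
    using assms(4) T0_max unfolding dra_threshold_def by simp
  also have "\<dots> = sum (wt(e := y)) T0"
    using T0(2) assms(2) by (intro sum.cong) auto
  also have "\<dots> \<le> sum (wt(e := y)) S"
    unfolding S_def using T0 assms(1,3) by (intro dra_alloc_optimal) auto
  finally show False by simp
qed

lemma cInf_eq_threshold:
  fixes p :: real
  assumes "{p<..} \<subseteq> S" "S \<subseteq> {p..}"
  shows "Inf S = p"
proof (rule antisym)
  show "Inf S \<le> p"
    using cInf_superset_mono[of "{p<..}" S] assms by (auto simp: bdd_below_def)
  show "p \<le> Inf S"
    using assms by (intro cInf_greatest) (auto intro: gt_ex[of p])
qed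

lemma critical_bid_eq:
  fixes wt :: "'a::linorder \<Rightarrow> real"
  assumes "finite R" "e \<notin> R" "{} \<in> F" "{e} \<in> F" "0 \<le> dra_threshold F e R wt"
  shows "critical_bid F e R wt (\<lambda>b. b - 1) = 1 + dra_threshold F e R wt"
  unfolding critical_bid_def
proof (rule cInf_eq_threshold)
  show "{1 + dra_threshold F e R wt<..} \<subseteq> {b. 0 \<le> b \<and> e \<in> dra_alloc F (insert e R) (wt(e := b - 1))}"
    using dra_alloc_wins[OF assms(1-4)] assms(5) by auto
  show "{b. 0 \<le> b \<and> e \<in> dra_alloc F (insert e R) (wt(e := b - 1))} \<subseteq> {1 + dra_threshold F e R wt..}"
    using dra_alloc_loses[OF assms(1-3)] by (force simp: not_le[symmetric])
qed

lemma real_payment_eq: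
  fixes wt :: "'a::linorder \<Rightarrow> real"
  assumes "finite R" "e \<notin> R" "{} \<in> F" "{e} \<in> F" "0 \<le> dra_threshold F e R wt"
    and "v \<noteq> 1 + dra_threshold F e R wt"
  shows "real_payment F e R wt (\<lambda>b. b - 1) v =
    (1 + dra_threshold F e R wt) * indicator {1 + dra_threshold F e R wt<..} v"
  using dra_alloc_wins[OF assms(1-4), where y = "v - 1"]
    dra_alloc_loses[OF assms(1-3), where y = "v - 1"]
    critical_bid_eq[OF assms(1-5)] assms(6)
  unfolding real_payment_def by (auto simp: indicator_def)

lemma dra_threshold_eq_0:
  fixes wt :: "'a::linorder \<Rightarrow> real"
  assumes "finite R" "D \<subseteq> R" "insert e D \<in> F"
    and "\<And>S. S \<subseteq> R \<Longrightarrow> insert e S \<in> F \<Longrightarrow> S \<in> F"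
    and "\<And>T. T \<in> F \<Longrightarrow> T \<subseteq> R \<Longrightarrow> sum wt T \<le> sum wt D"
  shows "dra_threshold F e R wt = 0"
proof -
  have "Max (sum wt ` {T \<in> F. T \<subseteq> R}) = sum wt D"
    using assms by (intro Max_eqI) auto
  moreover have "Max (sum wt ` {S. S \<subseteq> R \<and> insert e S \<in> F}) = sum wt D"
    using assms by (intro Max_eqI) auto
  ultimately show ?thesis unfolding dra_threshold_def by simp
qed

lemma dra_threshold_ge:
  fixes wt :: "'a::linorder \<Rightarrow> real"
  assumes "finite R" "R \<in> F" "insert e R \<notin> F" "{e} \<in> F"
    and "0 \<le> L" "\<And>y. y \<in> R \<Longrightarrow> L \<le> wt y"
  shows "L \<le> dra_threshold F e R wt"
proof -
  have "sum wt S \<le> sum wt R - L" if S: "S \<subseteq> R" "insert e S \<in> F" for S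
  proof -
    have "S \<noteq> R" using S(2) assms(3) by auto
    then obtain r where r: "r \<in> R - S" using S(1) by blast
    have "sum wt R = sum wt (R - S) + sum wt S"
      using S(1) assms(1) by (rule sum.subset_diff)
    moreover have "wt r \<le> sum wt (R - S)"
      using r assms(1,5,6) by (intro member_le_sum) (auto intro: order_trans)
    ultimately show ?thesis using assms(6) r by force
  qed
  then have "Max (sum wt ` {S. S \<subseteq> R \<and> insert e S \<in> F}) \<le> sum wt R - L"
    using assms(1,4) by (subst Max_le_iff) auto
  moreover have "sum wt R \<le> Max (sum wt ` {T \<in> F. T \<subseteq> R})"
    using assms(1,2) by (intro Max_ge) auto
  ultimately show ?thesis unfolding dra_threshold_def by simp
qed

lemma AE_density_lborel_neq:
  assumes "\<rho> \<in> borel_measurable borel"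
  shows "AE x in density lborel \<rho>. x \<noteq> a"
  using assms by (subst AE_density) (auto intro: eventually_mono[OF AE_lborel_singleton[of a]])

lemma integral_density_eq_off_point:
  fixes g r :: "real \<Rightarrow> real"
  assumes "\<rho> \<in> borel_measurable borel" "g \<in> borel_measurable borel"
    and "integrable (density lborel \<rho>) g" "\<And>v. v \<noteq> a \<Longrightarrow> r v = g v"
  shows "integrable (density lborel \<rho>) r"
    and "integral\<^sup>L (density lborel \<rho>) r = integral\<^sup>L (density lborel \<rho>) g"
proof -
  have r_eq: "r = (\<lambda>v. if v = a then r a else g v)" using assms(4) by auto
  have measurable_eq: "measurable (density lborel \<rho>) borel = borel_measurable borel"
    by (rule measurable_cong_sets) auto
  have "r \<in> borel_measurable (density lborel \<rho>)"
    unfolding measurable_eq using assms(2) by (subst r_eq) (measurable; simp)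
  moreover have "g \<in> borel_measurable (density lborel \<rho>)" unfolding measurable_eq by (fact assms(2))
  moreover have "AE v in density lborel \<rho>. r v = g v"
    using AE_density_lborel_neq[OF assms(1), of a] by eventually_elim (rule assms(4))
  ultimately show "integrable (density lborel \<rho>) r"
    and "integral\<^sup>L (density lborel \<rho>) r = integral\<^sup>L (density lborel \<rho>) g"
    using integrable_cong_AE integral_cong_AE assms(3) by blast+
qed

lemma exp1_measure_greaterThan:
  assumes "0 \<le> a"
  shows "measure exp1_dist {a<..} = exp (- a)"
proof -
  interpret prob_space exp1_dist by (rule prob_space_exponential_density) simp
  have "distributed exp1_dist lborel (\<lambda>x. x) (exponential_density 1)"
    unfolding distributed_def by (auto intro: distr_id2)
  from exponential_distributedD_gt[OF this assms] show ?thesis by (simp add: greaterThan_def)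
qed

lemma exp1_integral_step_function:
  fixes r :: "real \<Rightarrow> real"
  assumes "0 \<le> q" "0 \<le> p" "\<And>v. v \<noteq> a \<Longrightarrow> r v = indicator {q<..} v + c * indicator {p<..} v"
  shows "integrable exp1_dist r" "integral\<^sup>L exp1_dist r = exp (- q) + c * exp (- p)"
proof -
  interpret prob_space exp1_dist by (rule prob_space_exponential_density) simp
  define g where "g = (\<lambda>v. indicator {q<..} v + c * indicator {p<..} v :: real)"
  have "integrable exp1_dist g" unfolding g_def by (auto simp: less_top[symmetric])
  moreover have "integral\<^sup>L exp1_dist g = exp (- q) + c * exp (- p)"
    unfolding g_def using exp1_measure_greaterThan assms(1,2) by (simp add: less_top[symmetric])
  moreover have "g \<in> borel_measurable borel" unfolding g_def by measurable
  ultimately show "integrable exp1_dist r" "integral\<^sup>L exp1_dist r = exp (- q) + c * exp (- p)"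
    using integral_density_eq_off_point[where \<rho> = "exponential_density 1" and g = g and r = r]
      assms(3)
    unfolding g_def by auto
qed

lemma virtual_value_exp: "virtual_value exp_cdf exp_pdf = (\<lambda>b. b - 1)"
  by (auto simp: fun_eq_iff virtual_value_def exp_cdf_def exp_pdf_def)

lemma valid_report_exp: "valid_report exp_cdf exp_pdf"
  unfolding valid_report_def
proof (intro conjI allI impI)
  show "exp_cdf 0 = 0" by (simp add: exp_cdf_def)
  show "mono_on {0..} exp_cdf" by (auto intro!: mono_onI simp: exp_cdf_def)
  have "((\<lambda>t::real. exp (- t)) \<longlongrightarrow> 0) at_top"
    by (rule filterlim_compose[OF exp_at_bot filterlim_uminus_at_bot_at_top])
  then have "((\<lambda>t::real. 1 - exp (- t)) \<longlongrightarrow> 1 - 0) at_top" by (intro tendsto_intros)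
  then show "(exp_cdf \<longlongrightarrow> 1) at_top" by (simp add: exp_cdf_def[abs_def])
  fix b :: real
  show "0 < exp_pdf b" by (simp add: exp_pdf_def)
  show "(exp_cdf has_real_derivative exp_pdf b) (at b within {0..})"
    unfolding exp_cdf_def[abs_def] exp_pdf_def by (auto intro!: derivative_eq_intros)
qed

lemma non_matroid_witness:
  assumes "finite E" "downward_closed E F" "\<not> is_matroid E F"
  obtains A B x where "A \<in> F" "B \<in> F" "x \<in> A" "x \<notin> B" "insert x B \<notin> F"
    "\<forall>b\<in>B - A. insert b (A - {x}) \<notin> F"
proof -
  define violates where "violates = (\<lambda>(A, B). A \<in> F \<and> B \<in> F \<and> card B < card A \<and>
      (\<forall>a\<in>A - B. insert a B \<notin> F))"
  obtain A0 B0 where "violates (A0, B0)"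
    using assms(2,3) unfolding is_matroid_def violates_def by auto
  then obtain A B where AB: "violates (A, B)"
    and minimal: "\<And>A' B'. violates (A', B') \<Longrightarrow> card (A \<union> B) \<le> card (A' \<union> B')"
    using ex_has_least_nat[of violates "(A0, B0)" "\<lambda>(A, B). card (A \<union> B)"] by auto
  have AF: "A \<in> F" and BF: "B \<in> F" and card_less: "card B < card A"
    and no_aug: "\<forall>a\<in>A - B. insert a B \<notin> F"
    using AB unfolding violates_def by auto
  have fin: "finite A" "finite B"
    using AF BF assms(1,2) unfolding downward_closed_def by (auto intro: finite_subset)
  obtain x where x: "x \<in> A" "x \<notin> B"
    using card_less card_mono[OF fin(2), of A] by (auto simp: not_le[symmetric])
  have "insert b (A - {x}) \<notin> F" if b: "b \<in> B - A" for b
  proof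
    assume CF: "insert b (A - {x}) \<in> F"
    have "card (insert b (A - {x})) = card A"
      using b x fin card_less by (simp add: card_Diff_singleton)
    then have "violates (insert b (A - {x}), B)"
      using CF BF card_less no_aug b unfolding violates_def by auto
    then have "card (A \<union> B) \<le> card (insert b (A - {x}) \<union> B)" by (rule minimal)
    also have "insert b (A - {x}) \<union> B = (A \<union> B) - {x}" using b x by auto
    also have "card \<dots> < card (A \<union> B)" using x fin by (intro card_Diff1_less) auto
    finally show False by simp
  qed
  then show ?thesis using that AF BF x no_aug by blast
qed

lemma sum_two_level_le:
  fixes M l :: real
  assumes "finite D" "finite T" "\<not> D \<subseteq> T" "0 \<le> l" "real (card (T - D)) * l \<le> M"
  shows "(\<Sum>y\<in>T. if y \<in> D then M else l) \<le> M * real (card D)"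
proof -
  have M: "0 \<le> M" using assms(4,5) by (meson mult_nonneg_nonneg of_nat_0_le_iff order_trans)
  have "card (T \<inter> D) < card D" using assms(1,3) by (intro psubset_card_mono) auto
  then have "M * real (card (T \<inter> D)) \<le> M * (real (card D) - 1)"
    using M by (intro mult_left_mono) auto
  moreover have "(\<Sum>y\<in>T. if y \<in> D then M else l) = M * real (card (T \<inter> D)) + real (card (T - D)) * l"
    using assms(2) by (simp add: sum.If_cases Diff_eq)
  ultimately show ?thesis using assms(5) by (simp add: algebra_simps)
qed

lemma honest_expected_revenue:
  assumes "{} \<in> F" "{e} \<in> F"
  shows "expected_revenue F e f {} (\<lambda>_. 0) exp_cdf exp_pdf (\<lambda>_. {}) = exp (- 1)"
proof -
  have threshold: "dra_threshold F e {} (\<lambda>_. 0) = 0"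
    using assms by (intro dra_threshold_eq_0[where D = "{}"]) auto
  have "dra_revenue F e f {} (\<lambda>_. 0) exp_cdf exp_pdf (\<lambda>_. {}) v = indicator {1<..} v + 0 * indicator {0<..} v"
    if "v \<noteq> 1" for v
    using real_payment_eq[of "{}" e F "\<lambda>_. 0" v] assms threshold that
    by (simp add: dra_revenue_def virtual_value_exp)
  from exp1_integral_step_function(2)[OF _ _ this] show ?thesis
    unfolding expected_revenue_def by simp
qed

lemma heavy_set_optimal:
  fixes M l :: real
  assumes "finite A" "finite B" "\<And>X Y. X \<in> F \<Longrightarrow> Y \<subseteq> X \<Longrightarrow> Y \<in> F"
    and "\<forall>b\<in>B - A. insert b (A - {x}) \<notin> F" "0 \<le> l" "real (card B) * l \<le> M"
    and "T \<in> F" "T \<subseteq> (A \<union> B) - {x}"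
  shows "(\<Sum>y\<in>T. if y \<in> A - {x} then M else l) \<le> (\<Sum>y\<in>A - {x}. if y \<in> A - {x} then M else l)"
proof (cases "A - {x} \<subseteq> T")
  case True
  have "T \<subseteq> A - {x}"
  proof
    fix b assume "b \<in> T"
    show "b \<in> A - {x}"
    proof (rule ccontr)
      assume "b \<notin> A - {x}"
      then have "b \<in> B - A" using \<open>b \<in> T\<close> assms(8) by auto
      moreover have "insert b (A - {x}) \<in> F" using True \<open>b \<in> T\<close> assms(3,7) by blast
      ultimately show False using assms(4) by blast
    qed
  qed
  then have "T = A - {x}" using True by (rule subset_antisym)
  then show ?thesis by simp
next
  case False
  have "card (T - (A - {x})) \<le> card B"
    using assms(2,8) by (intro card_mono) auto
  then have "real (card (T - (A - {x}))) * l \<le> real (card B) * l"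
    using assms(5) by (intro mult_right_mono) auto
  then have "real (card (T - (A - {x}))) * l \<le> M" using assms(6) by linarith
  moreover have "finite T" using assms(1,2,8) finite_subset by auto
  ultimately have "(\<Sum>y\<in>T. if y \<in> A - {x} then M else l) \<le> M * real (card (A - {x}))"
    using False assms(1,5) by (intro sum_two_level_le) auto
  then show ?thesis by (simp add: mult.commute)
qed

lemma conceal_above_price_revenue:
  fixes wt :: "'a::linorder \<Rightarrow> real"
  assumes "finite K" "x \<notin> K" "B \<subseteq> K" "{} \<in> F" "{x} \<in> F"
    and "dra_threshold F x K wt = 0" "0 \<le> dra_threshold F x B wt" "v \<noteq> 1"
  defines "t \<equiv> dra_threshold F x B wt"
  shows "dra_revenue F x f K wt exp_cdf exp_pdf (\<lambda>v. if v \<le> 1 + t then K else B) v =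
    indicator {1<..} v + (t - f * real (card (K - B))) * indicator {1 + t<..} v"
proof (cases "v \<le> 1 + t")
  case True
  then show ?thesis
    using real_payment_eq[of K x F wt v] assms
    by (simp add: dra_revenue_def virtual_value_exp indicator_def)
next
  case False
  moreover have "finite B" "x \<notin> B" using assms(1-3) finite_subset by auto
  ultimately show ?thesis
    using real_payment_eq[of B x F wt v] assms
    by (simp add: dra_revenue_def virtual_value_exp indicator_def)
qed

lemma profitable_deviation:
  fixes F :: "'a::linorder set set"
  assumes "finite E" "downward_closed E F" "0 \<le> f"
    and "A \<in> F" "B \<in> F" "x \<in> A" "x \<notin> B" "insert x B \<notin> F"
    and "\<forall>b\<in>B - A. insert b (A - {x}) \<notin> F"
  obtains K wt rv where "admissible_strategy E F x f K wt exp_cdf exp_pdf rv"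
    and "exp (- 1) < expected_revenue F x f K wt exp_cdf exp_pdf rv"
proof -
  have down: "\<And>X Y. X \<in> F \<Longrightarrow> Y \<subseteq> X \<Longrightarrow> Y \<in> F" and "A \<subseteq> E" "B \<subseteq> E"
    using assms(2,4,5) unfolding downward_closed_def by auto
  then have fin: "finite A" "finite B" using assms(1) finite_subset by blast+
  have singletons: "{} \<in> F" "{x} \<in> F" using down[OF assms(4)] assms(6) by auto
  define K where "K = (A \<union> B) - {x}"
  \<comment> \<open>\<open>L\<close> exceeds the burnt collateral \<open>f n\<close> by \<open>1\<close>; \<open>M\<close> outweighs \<open>|B|\<close> bids of weight \<open>L\<close>.\<close>
  define n where "n = card (K - B)"
  define L where "L = f * real n + 1"
  define M where "M = L * (real (card B) + 1)"
  define wt where "wt = (\<lambda>y. if y \<in> A - {x} then M else L)"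
  have L: "1 \<le> L" "L \<le> M"
    using assms(3) unfolding L_def M_def by (auto simp: algebra_simps)
  have fin_K: "finite K" "x \<notin> K" using fin unfolding K_def by auto
  have threshold_K: "dra_threshold F x K wt = 0"
  proof (rule dra_threshold_eq_0[where D = "A - {x}"])
    show "sum wt T \<le> sum wt (A - {x})" if "T \<in> F" "T \<subseteq> K" for T
      unfolding wt_def using that fin down assms(9) L
      by (intro heavy_set_optimal) (auto simp: K_def M_def algebra_simps)
  qed (use fin_K down assms(4,6) in \<open>auto simp: K_def insert_absorb\<close>)
  define t where "t = dra_threshold F x B wt"
  have "L \<le> t"
    unfolding t_def wt_def using fin assms(5,8) singletons L by (intro dra_threshold_ge) auto
  define rv where "rv = (\<lambda>v. if v \<le> 1 + t then K else B)"
  have "0 \<le> t" using \<open>L \<le> t\<close> L by simp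
  then have revenue: "dra_revenue F x f K wt exp_cdf exp_pdf rv v =
      indicator {1<..} v + (t - f * real n) * indicator {1 + t<..} v" if "v \<noteq> 1" for v
    unfolding rv_def t_def n_def using fin_K singletons threshold_K that assms(7)
    by (intro conceal_above_price_revenue) (auto simp: K_def t_def)
  note revenue_integral = exp1_integral_step_function[OF _ _ revenue]
  have "admissible_strategy E F x f K wt exp_cdf exp_pdf rv"
    unfolding admissible_strategy_def
    using revenue_integral(1) \<open>0 \<le> t\<close> valid_report_exp \<open>A \<subseteq> E\<close> \<open>B \<subseteq> E\<close> assms(7)
    by (auto simp: K_def rv_def)
  moreover have "exp (- 1) < expected_revenue F x f K wt exp_cdf exp_pdf rv"
    using revenue_integral(2) \<open>0 \<le> t\<close> \<open>L \<le> t\<close> unfolding expected_revenue_def L_def by simp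
  ultimately show ?thesis by (rule that)
qed

theorem mainTheorem4:
  fixes E :: "'a::linorder set" and F :: "'a set set" and f :: real
  assumes "finite E" and "downward_closed E F" and "\<not> is_matroid E F" and "0 \<le> f"
  shows "\<exists>e\<in>E. \<not> dra_credible_single E F e f"
proof -
  obtain A B x where witness: "A \<in> F" "B \<in> F" "x \<in> A" "x \<notin> B" "insert x B \<notin> F"
    "\<forall>b\<in>B - A. insert b (A - {x}) \<notin> F"
    using non_matroid_witness[OF assms(1-3)] by blast
  obtain K wt rv where "admissible_strategy E F x f K wt exp_cdf exp_pdf rv"
    and "exp (- 1) < expected_revenue F x f K wt exp_cdf exp_pdf rv"
    using profitable_deviation[OF assms(1,2,4) witness] by blast
  moreover have "{} \<in> F" "{x} \<in> F" "x \<in> E"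
    using assms(2) witness(1,3) unfolding downward_closed_def by auto
  ultimately show ?thesis
    unfolding dra_credible_single_def using honest_expected_revenue[of F x f] by force
qed

end
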